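(* Let $K=(S,L,\to)$ be a Kripke structure and $s,t\in S$. Then $s\approx_L^{\Delta\delta}t$ if and only if for every $\mathsf{LTL}_\infty$ formula $\psi$: $s\models\psi\iff t\models\psi$.
   Context: Fix a set $\mathbf{AP}$ of atomic propositions. A Kripke structure is $K=(S,L,\to)$ with $L:S\to\mathcal{P}(\mathbf{AP})$ and $\to\subseteq S\times S$ (not necessarily total). Paths are finite sequences $s_0,\dots,s_n$ or infinite sequences $s_0,s_1,\dots$ with $s_k\to s_{k+1}$; a path is maximal if infinite or if its last state has no successor. For a path $\pi$, $L(\pi)$ is obtained from $L(s_0),L(s_1),\dots$ by contracting each maximal (finite or infinite) block of consecutive equal entries to one entry. For paths $\pi$ from $s$: $L(\pi)$ is a complete $L$-coloured trace of $s$ if $\pi$ is maximal, a divergent one if $\pi$ is infinite and $L(\pi)$ finite, and a deadlock one if $\pi$ is finite and maximal. $s\approx_L^{\Delta\delta}t$ iff $s$ and $t$ have the same complete, the same divergent and the same deadlock $L$-coloured traces. $\mathsf{LTL}_\infty$ formulas: $\psi::=p\mid\neg\psi\mid\bigwedge\Psi'\mid\psi\,\mathsf{U}\,\psi\mid\infty$ with $p\in\mathbf{AP}$ and $\Psi'$ an arbitrary set. On maximal paths: $\pi\models p$ iff $p$ is in the label of the first state of $\pi$; negation and conjunction as usual; $\pi\models\psi\,\mathsf{U}\,\psi'$ iff some suffix $\pi'$ of $\pi$ has $\pi'\models\psi'$ and $\pi''\models\psi$ for every suffix $\pi''$ of $\pi$ of which $\pi'$ is a proper suffix; $\pi\models\infty$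 iff $\pi$ is infinite. For a state, $s\models\psi$ iff $\pi\models\psi$ for all maximal paths $\pi$ from $s$. *)

theory Defs
  imports Main "HOL-Library.Infinite_Set"
begin

datatype 'a seq = FinS "'a list" | InfS "nat \<Rightarrow> 'a"

fun seq_map :: "('a \<Rightarrow> 'b) \<Rightarrow> 'a seq \<Rightarrow> 'b seq" where
  "seq_map g (FinS xs) = FinS (map g xs)"
| "seq_map g (InfS f) = InfS (g \<circ> f)"

fun seq_hd :: "'a seq \<Rightarrow> 'a" where
  "seq_hd (FinS xs) = hd xs"
| "seq_hd (InfS f) = f 0"

fun seq_drop :: "nat \<Rightarrow> 'a seq \<Rightarrow> 'a seq" where
  "seq_drop i (FinS xs) = FinS (drop i xs)"
| "seq_drop i (InfS f) = InfS (\<lambda>k. f (k + i))"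

text \<open>valid positions; suffixes of a sequence are exactly seq_drop i for valid i\<close>
fun seq_idx :: "'a seq \<Rightarrow> nat \<Rightarrow> bool" where
  "seq_idx (FinS xs) i = (i < length xs)"
| "seq_idx (InfS f) i = True"

fun seq_infinite :: "'a seq \<Rightarrow> bool" where
  "seq_infinite (FinS xs) = False"
| "seq_infinite (InfS f) = True"

text \<open>A Kripke structure K = (S, L, \<rightarrow>) is given by the state type 's (S = UNIV),
  a labelling L :: 's \<Rightarrow> 'p set and a (not necessarily total) transition
  relation R :: 's \<Rightarrow> 's \<Rightarrow> bool.\<close>

fun is_path_from :: "('s \<Rightarrow> 's \<Rightarrow> bool) \<Rightarrow> 's \<Rightarrow> 's seq \<Rightarrow> bool" where
  "is_path_from R s (FinS xs) =
     (xs \<noteq> [] \<and> hd xs = s \<and> (\<forall>k. Suc k < length xs \<longrightarrow> R (xs ! k) (xs ! Suc k)))"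
| "is_path_from R s (InfS f) = (f 0 = s \<and> (\<forall>k. R (f k) (f (Suc k))))"

fun is_maximal :: "('s \<Rightarrow> 's \<Rightarrow> bool) \<Rightarrow> 's seq \<Rightarrow> bool" where
  "is_maximal R (FinS xs) = (\<forall>u. \<not> R (last xs) u)"
| "is_maximal R (InfS f) = True"

text \<open>Each maximal (finite or infinite) block of consecutive equal entries is
  contracted to one entry.\<close>

fun destutter :: "'a seq \<Rightarrow> 'a seq" where
  "destutter (FinS xs) = FinS (remdups_adj xs)"
| "destutter (InfS f) =
     (if \<exists>N. \<forall>k\<ge>N. f k = f N
      then FinS (remdups_adj (map f [0..<Suc (LEAST N. \<forall>k\<ge>N. f k = f N)]))
      else InfS (\<lambda>n. f (enumerate {k. k = 0 \<or> f k \<noteq> f (k - 1)} n)))"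

definition coloured :: "('s \<Rightarrow> 'p set) \<Rightarrow> 's seq \<Rightarrow> 'p set seq" where
  "coloured L \<pi> = destutter (seq_map L \<pi>)"

definition complete_traces :: "('s \<Rightarrow> 's \<Rightarrow> bool) \<Rightarrow> ('s \<Rightarrow> 'p set) \<Rightarrow> 's \<Rightarrow> 'p set seq set" where
  "complete_traces R L s = {coloured L \<pi> | \<pi>. is_path_from R s \<pi> \<and> is_maximal R \<pi>}"

definition divergent_traces :: "('s \<Rightarrow> 's \<Rightarrow> bool) \<Rightarrow> ('s \<Rightarrow> 'p set) \<Rightarrow> 's \<Rightarrow> 'p set seq set" where
  "divergent_traces R L s = {coloured L \<pi> | \<pi>. is_path_from R s \<pi> \<and> seq_infinite \<pi>
                                              \<and> \<not> seq_infinite (coloured L \<pi>)}"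

definition deadlock_traces :: "('s \<Rightarrow> 's \<Rightarrow> bool) \<Rightarrow> ('s \<Rightarrow> 'p set) \<Rightarrow> 's \<Rightarrow> 'p set seq set" where
  "deadlock_traces R L s = {coloured L \<pi> | \<pi>. is_path_from R s \<pi> \<and> \<not> seq_infinite \<pi>
                                             \<and> is_maximal R \<pi>}"

definition div_dead_equiv :: "('s \<Rightarrow> 's \<Rightarrow> bool) \<Rightarrow> ('s \<Rightarrow> 'p set) \<Rightarrow> 's \<Rightarrow> 's \<Rightarrow> bool" where
  "div_dead_equiv R L s t \<longleftrightarrow>
     complete_traces R L s = complete_traces R L t \<and>
     divergent_traces R L s = divergent_traces R L t \<and>
     deadlock_traces R L s = deadlock_traces R L t"

text \<open>The satisfaction of an LTL_\<infinity> formula by a path depends only on the label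
  sequence of the path. ltl_inf is the set of meanings of LTL_\<infinity> formulas, as
  predicates on label sequences: the least set closed under the semantic
  counterparts of the formula constructors (conjunction over arbitrary sets).\<close>

inductive_set ltl_inf :: "('p set seq \<Rightarrow> bool) set" where
  atom: "(\<lambda>w. p \<in> seq_hd w) \<in> ltl_inf"
| neg: "\<phi> \<in> ltl_inf \<Longrightarrow> (\<lambda>w. \<not> \<phi> w) \<in> ltl_inf"
| conj: "(\<forall>\<phi>\<in>\<Phi>. \<phi> \<in> ltl_inf) \<Longrightarrow> (\<lambda>w. \<forall>\<phi>\<in>\<Phi>. \<phi> w) \<in> ltl_inf"
| until: "\<phi> \<in> ltl_inf \<Longrightarrow> \<psi> \<in> ltl_inf \<Longrightarrow>
    (\<lambda>w. \<exists>i. seq_idx w i \<and> \<psi> (seq_drop i w) \<and> (\<forall>j<i. \<phi> (seq_drop j w))) \<in> ltl_inf"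
| infty: "(\<lambda>w. seq_infinite w) \<in> ltl_inf"

definition state_sat :: "('s \<Rightarrow> 's \<Rightarrow> bool) \<Rightarrow> ('s \<Rightarrow> 'p set) \<Rightarrow> 's \<Rightarrow> ('p set seq \<Rightarrow> bool) \<Rightarrow> bool" where
  "state_sat R L s \<psi> \<longleftrightarrow> (\<forall>\<pi>. is_path_from R s \<pi> \<and> is_maximal R \<pi> \<longrightarrow> \<psi> (seq_map L \<pi>))"

end

theory Submission
  imports Defs
begin

text \<open>Satisfaction of an \<open>LTL\<^sub>\<infinity>\<close> formula by a path depends only on the contracted label
  sequence and on whether the path is infinite: the formulas are invariant under stuttering, and
  \<open>\<infinity>\<close> only sees finiteness. Conversely, every contracted trace \<open>\<sigma>\<close> has a characteristic
  formula. Nested untils \<open>A\<^sub>0 U (A\<^sub>1 U \<dots>)\<close> say that a trace starts with a given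
  stutter-free prefix; the conjunction over all prefixes of an infinite \<open>\<sigma>\<close>, or over the
  negations of all one-step extensions of a finite one, characterises \<open>\<sigma>\<close> exactly. If \<open>\<sigma>\<close> is the
  trace of a maximal path from \<open>s\<close> of a given finiteness but of no such path from \<open>t\<close>, the
  negated characteristic formula (conjoined with \<open>\<infinity>\<close> or \<open>\<not>\<infinity>\<close>) holds in \<open>t\<close> and fails in
  \<open>s\<close>. Finally, complete, divergent and deadlock traces together carry the same information as the
  traces of maximal paths split by finiteness of the path.\<close>

section \<open>Sequences\<close>

fun seq_nth :: "'a seq \<Rightarrow> nat \<Rightarrow> 'a" where
  "seq_nth (FinS xs) i = xs ! i"
| "seq_nth (InfS f) i = f i"
\<comment> \<open>meaningful only at positions with \<open>seq_idx w i\<close>\<close>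

lemma seq_idx_drop [simp]: "seq_idx (seq_drop i w) k = seq_idx w (i + k)"
  by (cases w) auto

lemma seq_nth_drop: "seq_idx w i \<Longrightarrow> seq_nth (seq_drop i w) k = seq_nth w (i + k)"
  by (cases w) (auto simp: add.commute)

lemma seq_infinite_drop [simp]: "seq_infinite (seq_drop i w) = seq_infinite w"
  by (cases w) auto

lemma seq_hd_conv_nth: "seq_idx w 0 \<Longrightarrow> seq_hd w = seq_nth w 0"
  by (cases w) (auto simp: hd_conv_nth)

lemma seq_hd_drop: "seq_idx w i \<Longrightarrow> seq_hd (seq_drop i w) = seq_nth w i"
  using seq_hd_conv_nth[of "seq_drop i w"] seq_nth_drop[of w i 0] by simp

lemma seq_idx_le: "seq_idx w k \<Longrightarrow> i \<le> k \<Longrightarrow> seq_idx w i"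
  by (cases w) auto

lemma seq_idx_map [simp]: "seq_idx (seq_map g w) i = seq_idx w i"
  by (cases w) auto

lemma seq_infinite_map [simp]: "seq_infinite (seq_map g w) = seq_infinite w"
  by (cases w) auto

lemma seq_eqI:
  assumes "\<And>i. seq_idx v i \<longleftrightarrow> seq_idx v' i"
    and "\<And>i. seq_idx v i \<Longrightarrow> seq_nth v i = seq_nth v' i"
  shows "v = v'"
proof (cases v; cases v')
  fix xs ys assume v: "v = FinS xs" and v': "v' = FinS ys"
  have "length xs = length ys"
    using assms(1)[of "length xs"] assms(1)[of "length ys"] v v' by (simp add: not_less)
  then show ?thesis using assms v v' by (auto intro: nth_equalityI)
next
  fix xs f assume "v = FinS xs" "v' = InfS f"
  then show ?thesis using assms(1)[of "length xs"] by simp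
next
  fix f ys assume "v = InfS f" "v' = FinS ys"
  then show ?thesis using assms(1)[of "length ys"] by simp
next
  fix f g assume "v = InfS f" "v' = InfS g"
  then show ?thesis using assms(2) by auto
qed

section \<open>Contraction of blocks\<close>

text \<open>\<open>block_index g i\<close> is the number of the maximal constant block of \<open>g\<close> containing \<open>i\<close>,
  counted from \<open>0\<close>.\<close>

fun block_index :: "(nat \<Rightarrow> 'a) \<Rightarrow> nat \<Rightarrow> nat" where
  "block_index g 0 = 0"
| "block_index g (Suc i) = block_index g i + (if g (Suc i) \<noteq> g i then 1 else 0)"

lemma block_index_mono: "i \<le> k \<Longrightarrow> block_index g i \<le> block_index g k"
  by (induct k rule: dec_induct) auto

lemma block_index_less_imp_less: "block_index g i < block_index g k \<Longrightarrow> i < k"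
  using block_index_mono[of k i g] by (cases "k \<le> i") auto

lemma block_index_attains: "n \<le> block_index g k \<Longrightarrow> \<exists>i\<le>k. block_index g i = n"
proof (induct k)
  case (Suc k)
  show ?case
  proof (cases "n \<le> block_index g k")
    case True
    then show ?thesis using Suc.hyps le_SucI by meson
  next
    case False
    then have "block_index g (Suc k) = n" using Suc.prems by (auto split: if_splits)
    then show ?thesis by (intro exI[of _ "Suc k"]) simp
  qed
qed simp

lemma block_index_cong: "(\<And>k. k \<le> i \<Longrightarrow> g k = g' k) \<Longrightarrow> block_index g i = block_index g' i"
  by (induct i) auto

lemma block_index_add: "block_index g (i + k) = block_index g i + block_index (\<lambda>k. g (i + k)) k"
  by (induct k) auto

lemma block_index_eq_0:
  assumes "\<And>k. k \<le> i \<Longrightarrow> g k = g 0"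
  shows "block_index g i = 0"
  using assms
proof (induct i)
  case (Suc i)
  have "g (Suc i) = g 0" "g i = g 0" using Suc.prems[of "Suc i"] Suc.prems[of i] by simp_all
  moreover have "block_index g i = 0" by (rule Suc.hyps) (rule Suc.prems, simp)
  ultimately show ?case by simp
qed simp

lemma block_index_stable:
  assumes "\<And>k. N \<le> k \<Longrightarrow> g k = g N" "N \<le> i"
  shows "block_index g i = block_index g N"
  using assms(2)
proof (induct i rule: dec_induct)
  case (step n)
  then show ?case using assms(1)[of n] assms(1)[of "Suc n"] by simp
qed simp

definition seq_block :: "'a seq \<Rightarrow> nat \<Rightarrow> nat" where
  "seq_block w = block_index (seq_nth w)"

lemma seq_block_0 [simp]: "seq_block w 0 = 0"
  by (simp add: seq_block_def)

lemma seq_block_mono: "i \<le> k \<Longrightarrow> seq_block w i \<le> seq_block w k"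
  unfolding seq_block_def by (rule block_index_mono)

lemma seq_block_drop: "seq_idx w i \<Longrightarrow> seq_block w (i + k) = seq_block w i + seq_block (seq_drop i w) k"
  unfolding seq_block_def by (simp add: seq_nth_drop block_index_add cong: block_index_cong)

text \<open>A relational description of the contraction performed by \<open>destutter\<close>: block \<open>j\<close>
  of \<open>w\<close> becomes entry \<open>j\<close> of \<open>v\<close>.\<close>

definition contracts_to :: "'a seq \<Rightarrow> 'a seq \<Rightarrow> bool" where
  "contracts_to w v \<longleftrightarrow>
     (\<forall>j. seq_idx v j \<longleftrightarrow> (\<exists>i. seq_idx w i \<and> seq_block w i = j)) \<and>
     (\<forall>i. seq_idx w i \<longrightarrow> seq_nth v (seq_block w i) = seq_nth w i)"

lemma contracts_to_adjacent_distinct: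
  assumes "contracts_to w v" "seq_idx v (Suc k)"
  shows "seq_nth v (Suc k) \<noteq> seq_nth v k"
proof -
  obtain i0 where i0: "seq_idx w i0" "seq_block w i0 = Suc k"
    using assms unfolding contracts_to_def by blast
  define i where "i = (LEAST i. seq_block w i = Suc k)"
  have block_i: "seq_block w i = Suc k"
    unfolding i_def by (rule LeastI[of _ i0]) (rule i0(2))
  have "i \<le> i0"
    unfolding i_def by (rule Least_le) (rule i0(2))
  then have idx_i: "seq_idx w i"
    using i0 seq_idx_le by blast
  obtain p where p: "i = Suc p"
    using block_i by (cases i) auto
  have "seq_block w p \<noteq> Suc k"
    using not_less_Least[of p "\<lambda>i. seq_block w i = Suc k"] p i_def by auto
  then have "seq_block w p = k" and "seq_nth w i \<noteq> seq_nth w p"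
    using block_i p by (auto simp: seq_block_def split: if_splits)
  moreover have "seq_idx w p"
    using idx_i p seq_idx_le le_SucI by blast
  ultimately show ?thesis
    using assms(1) idx_i block_i unfolding contracts_to_def by metis
qed

lemma length_remdups_adj_take:
  "i < length xs \<Longrightarrow> length (remdups_adj (take (Suc i) xs)) = Suc (block_index (nth xs) i)"
proof (induct i)
  case 0
  then show ?case by (cases xs) auto
next
  case (Suc i)
  define ys where "ys = take (Suc i) xs"
  have "ys \<noteq> []" "last ys = xs ! i" "take (Suc (Suc i)) xs = ys @ [xs ! Suc i]"
    using Suc.prems by (simp_all add: ys_def take_Suc_conv_app_nth)
  then have "remdups_adj (take (Suc (Suc i)) xs) =
      remdups_adj ys @ (if xs ! Suc i = xs ! i then [] else [xs ! Suc i])"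
    by (simp add: remdups_adj_append'')
  then show ?case
    using Suc by (simp add: ys_def)
qed

lemma nth_remdups_adj_block_index:
  assumes "i < length xs"
  shows "remdups_adj xs ! block_index (nth xs) i = xs ! i"
proof -
  define ys where "ys = take (Suc i) xs"
  have "ys \<noteq> []" using assms by (auto simp: ys_def)
  then have "remdups_adj xs = remdups_adj ys @ remdups_adj (dropWhile (\<lambda>y. y = last ys) (drop (Suc i) xs))"
    unfolding ys_def by (metis append_take_drop_id remdups_adj_append'')
  moreover have "length (remdups_adj ys) = Suc (block_index (nth xs) i)"
    using length_remdups_adj_take[OF assms] by (simp add: ys_def)
  ultimately have "remdups_adj xs ! block_index (nth xs) i = remdups_adj ys ! block_index (nth xs) i"
    by (simp add: nth_append)
  also have "\<dots> = last (remdups_adj ys)"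
    using \<open>length (remdups_adj ys) = _\<close> \<open>ys \<noteq> []\<close> by (subst last_conv_nth) simp_all
  also have "\<dots> = xs ! i"
    using assms by (simp add: ys_def take_Suc_conv_app_nth)
  finally show ?thesis .
qed

lemma contracts_to_remdups_adj:
  assumes "xs \<noteq> []"
  shows "contracts_to (FinS xs) (FinS (remdups_adj xs))"
proof -
  have len: "length (remdups_adj xs) = Suc (block_index (nth xs) (length xs - 1))"
    using length_remdups_adj_take[of "length xs - 1" xs] assms by simp
  have "j < length (remdups_adj xs) \<longleftrightarrow> (\<exists>i<length xs. block_index (nth xs) i = j)" for j
  proof
    assume "j < length (remdups_adj xs)"
    then have "j \<le> block_index (nth xs) (length xs - 1)"
      using len by simp
    then obtain i where "i \<le> length xs - 1" "block_index (nth xs) i = j"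
      using block_index_attains by blast
    moreover have "i < length xs"
      using calculation(1) assms by (cases xs) auto
    ultimately show "\<exists>i<length xs. block_index (nth xs) i = j"
      by blast
  next
    assume "\<exists>i<length xs. block_index (nth xs) i = j"
    then obtain i where "i < length xs" "block_index (nth xs) i = j"
      by blast
    moreover have "i \<le> length xs - 1"
      using \<open>i < length xs\<close> by simp
    ultimately show "j < length (remdups_adj xs)"
      using len block_index_mono[of i "length xs - 1" "nth xs"] by simp
  qed
  moreover have "seq_nth (FinS xs) = nth xs" by (rule ext) simp
  ultimately show ?thesis
    unfolding contracts_to_def seq_block_def by (simp add: nth_remdups_adj_block_index)
qed

lemma contracts_to_eventually_const:
  assumes stable: "\<And>k. N \<le> k \<Longrightarrow> f k = f N"
  shows "contracts_to (InfS f) (FinS (remdups_adj (map f [0..<Suc N])))"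
proof -
  define xs where "xs = map f [0..<Suc N]"
  have len_xs: "length xs = Suc N"
    by (simp add: xs_def)
  have nth_xs: "k \<le> N \<Longrightarrow> xs ! k = f k" for k
    unfolding xs_def by (simp add: less_Suc_eq_le del: upt_Suc)
  have block_xs: "i \<le> N \<Longrightarrow> block_index (nth xs) i = block_index f i" for i
    by (rule block_index_cong) (simp add: nth_xs)
  have block_f: "N \<le> i \<Longrightarrow> block_index f i = block_index f N" for i
    using block_index_stable[of N f i] stable by blast
  have len: "length (remdups_adj xs) = Suc (block_index f N)"
    using length_remdups_adj_take[of N xs] len_xs block_xs[of N] by simp
  have nth: "remdups_adj xs ! block_index f i = f i" if "i \<le> N" for i
    using nth_remdups_adj_block_index[of i xs] that len_xs block_xs nth_xs by simp
  have "j < length (remdups_adj xs) \<longleftrightarrow> (\<exists>i. block_index f i = j)" for j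
  proof
    assume "j < length (remdups_adj xs)"
    then show "\<exists>i. block_index f i = j"
      using len block_index_attains[of j f N] by auto
  next
    assume "\<exists>i. block_index f i = j"
    then obtain i where "block_index f i = j" by blast
    then show "j < length (remdups_adj xs)"
      using len block_index_mono[of i N f] block_f[of i] by (cases "i \<le> N") auto
  qed
  moreover have "remdups_adj xs ! block_index f i = f i" for i
    using nth[of i] nth[of N] block_f[of i] stable[of i] by (cases "i \<le> N") auto
  moreover have "seq_nth (InfS f) = f" by (rule ext) simp
  ultimately show ?thesis
    unfolding contracts_to_def seq_block_def xs_def[symmetric] by simp
qed

definition change_points :: "(nat \<Rightarrow> 'a) \<Rightarrow> nat set" where
  "change_points f = {k. k = 0 \<or> f k \<noteq> f (k - 1)}"

lemma infinite_change_points: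
  assumes "\<nexists>N. \<forall>k\<ge>N. f k = f N"
  shows "infinite (change_points f)"
proof
  assume fin: "finite (change_points f)"
  define N where "N = Suc (Max (change_points f))"
  have "f k = f N" if "N \<le> k" for k
    using that
  proof (induct k rule: dec_induct)
    case (step m)
    have "Suc m \<notin> change_points f"
      using fin step.hyps(1) Max_ge N_def by fastforce
    then show ?case
      using step.hyps(3) by (simp add: change_points_def)
  qed simp
  then show False
    using assms by blast
qed

context
  fixes f :: "nat \<Rightarrow> 'a"
  assumes infinite: "infinite (change_points f)"
begin

abbreviation change_point :: "nat \<Rightarrow> nat" where
  "change_point \<equiv> enumerate (change_points f)"

lemma enumerate_change_points_0: "change_point 0 = 0"
  unfolding enumerate_0 change_points_def by (rule Least_equality) auto

lemma constant_between_change_points: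
  assumes "change_point n \<le> k" "k < change_point (Suc n)"
  shows "f k = f (change_point n) \<and> block_index f k = block_index f (change_point n)"
  using assms
proof (induct k rule: dec_induct)
  case (step m)
  have "change_point (Suc n) = (LEAST s. s \<in> change_points f \<and> change_point n < s)"
    by (rule enumerate_Suc''[OF infinite])
  then have "Suc m \<notin> change_points f"
    using step not_less_Least[of "Suc m" "\<lambda>s. s \<in> change_points f \<and> change_point n < s"] by auto
  then show ?case
    using step by (simp add: change_points_def)
qed simp

lemma block_index_enumerate_change_points: "block_index f (change_point n) = n"
proof (induct n)
  case 0
  then show ?case by (simp add: enumerate_change_points_0)
next
  case (Suc n)
  have "change_point n < change_point (Suc n)"
    using enumerate_mono[OF lessI infinite] .
  then obtain m where m: "change_point (Suc n) = Suc m" "change_point n \<le> m"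
    by (cases "change_point (Suc n)") auto
  have "change_point (Suc n) \<in> change_points f"
    by (rule enumerate_in_set[OF infinite])
  then have "f (Suc m) \<noteq> f m"
    using m by (simp add: change_points_def)
  moreover have "block_index f m = n"
    using constant_between_change_points[of n m] m Suc by simp
  ultimately show ?case
    using m by simp
qed

lemma between_change_points: "\<exists>n. change_point n \<le> i \<and> i < change_point (Suc n)"
proof -
  define m where "m = (LEAST m. i < change_point m)"
  have "i < change_point m"
    unfolding m_def by (rule LeastI[of _ "Suc i"]) (use le_enumerate[OF infinite, of "Suc i"] in simp)
  moreover obtain n where n: "m = Suc n"
    using calculation by (cases m) (auto simp: enumerate_change_points_0)
  moreover have "\<not> i < change_point n"
    using not_less_Least[of n "\<lambda>m. i < change_point m"] n m_def by simp
  ultimately show ?thesis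
    by (auto simp: not_less)
qed

lemma contracts_to_enumerate_change_points:
  "contracts_to (InfS f) (InfS (\<lambda>n. f (change_point n)))"
proof -
  have "f (change_point (block_index f i)) = f i" for i
  proof -
    obtain n where "change_point n \<le> i" "i < change_point (Suc n)"
      using between_change_points by blast
    then have "f i = f (change_point n)" "block_index f i = n"
      using constant_between_change_points block_index_enumerate_change_points by simp_all
    then show ?thesis by simp
  qed
  moreover have "seq_nth (InfS f) = f" by (rule ext) simp
  ultimately show ?thesis
    unfolding contracts_to_def seq_block_def using block_index_enumerate_change_points by auto
qed

end

lemma contracts_to_destutter: "seq_idx w 0 \<Longrightarrow> contracts_to w (destutter w)"
proof (cases w)
  case (FinS xs)
  then show "seq_idx w 0 \<Longrightarrow> ?thesis"
    using contracts_to_remdups_adj[of xs] by auto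
next
  case (InfS f)
  show ?thesis
  proof (cases "\<exists>N. \<forall>k\<ge>N. f k = f N")
    case True
    define N where "N = (LEAST N. \<forall>k\<ge>N. f k = f N)"
    have stable: "\<forall>k\<ge>N. f k = f N"
      unfolding N_def using True by (rule LeastI_ex)
    have "destutter w = FinS (remdups_adj (map f [0..<Suc N]))"
      using InfS True N_def by simp
    then show ?thesis
      unfolding InfS by (metis contracts_to_eventually_const stable)
  next
    case False
    then have "destutter w = InfS (\<lambda>n. f (enumerate (change_points f) n))"
      unfolding InfS change_points_def by (simp only: destutter.simps if_False)
    then show ?thesis
      unfolding InfS using contracts_to_enumerate_change_points[OF infinite_change_points[OF False]]
      by simp
  qed
qed

section \<open>Stutter invariance of \<open>LTL\<^sub>\<infinity>\<close>\<close>

lemma contracts_to_drop: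
  assumes v: "contracts_to w v" and i: "seq_idx w i"
  shows "contracts_to (seq_drop i w) (seq_drop (seq_block w i) v)"
  unfolding contracts_to_def
proof (intro conjI allI impI)
  fix j
  show "seq_idx (seq_drop (seq_block w i) v) j \<longleftrightarrow>
      (\<exists>k. seq_idx (seq_drop i w) k \<and> seq_block (seq_drop i w) k = j)"
  proof
    assume "seq_idx (seq_drop (seq_block w i) v) j"
    then obtain m where m: "seq_idx w m" "seq_block w m = seq_block w i + j"
      using v unfolding contracts_to_def by auto
    show "\<exists>k. seq_idx (seq_drop i w) k \<and> seq_block (seq_drop i w) k = j"
    proof (cases "m < i")
      case True
      then have "j = 0"
        using seq_block_mono[of m i w] m by simp
      then show ?thesis
        using i by (intro exI[of _ 0]) (simp add: seq_block_def)
    next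
      case False
      then show ?thesis
        using m seq_block_drop[OF i, of "m - i"] by (intro exI[of _ "m - i"]) simp
    qed
  next
    assume "\<exists>k. seq_idx (seq_drop i w) k \<and> seq_block (seq_drop i w) k = j"
    then obtain k where "seq_idx w (i + k)" "seq_block (seq_drop i w) k = j"
      by auto
    then show "seq_idx (seq_drop (seq_block w i) v) j"
      using v seq_block_drop[OF i, of k] unfolding contracts_to_def by auto
  qed
next
  fix k
  assume k: "seq_idx (seq_drop i w) k"
  have "seq_idx v (seq_block w i)"
    using v i unfolding contracts_to_def by blast
  then have "seq_nth (seq_drop (seq_block w i) v) (seq_block (seq_drop i w) k) =
      seq_nth v (seq_block w (i + k))"
    using seq_block_drop[OF i, of k] by (simp add: seq_nth_drop)
  also have "\<dots> = seq_nth (seq_drop i w) k"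
    using v k i unfolding contracts_to_def by (simp add: seq_nth_drop)
  finally show "seq_nth (seq_drop (seq_block w i) v) (seq_block (seq_drop i w) k) =
      seq_nth (seq_drop i w) k" .
qed

text \<open>Finiteness is part of the equivalence, since \<open>\<infinity>\<close> separates a finite sequence from an
  infinite one that is eventually constant.\<close>

definition stutter_equiv :: "'a seq \<Rightarrow> 'a seq \<Rightarrow> bool" where
  "stutter_equiv w w' \<longleftrightarrow> seq_idx w 0 \<and> seq_idx w' 0 \<and> seq_infinite w = seq_infinite w' \<and>
     (\<exists>v. contracts_to w v \<and> contracts_to w' v)"

lemma stutter_equiv_sym: "stutter_equiv w w' \<Longrightarrow> stutter_equiv w' w"
  unfolding stutter_equiv_def by metis

lemma stutter_equivI:
  assumes "seq_idx w 0" "seq_idx w' 0" "seq_infinite w = seq_infinite w'"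
    and "destutter w = destutter w'"
  shows "stutter_equiv w w'"
  using assms contracts_to_destutter unfolding stutter_equiv_def by metis

lemma stutter_equiv_hd: "stutter_equiv w w' \<Longrightarrow> seq_hd w = seq_hd w'"
  unfolding stutter_equiv_def contracts_to_def by (metis seq_block_0 seq_hd_conv_nth)

lemma stutter_equiv_same_block:
  assumes "stutter_equiv w w'" "seq_idx w i"
  obtains i' where "seq_idx w' i'" "seq_block w' i' = seq_block w i"
  using assms unfolding stutter_equiv_def contracts_to_def by metis

lemma stutter_equiv_drop:
  assumes E: "stutter_equiv w w'" and i: "seq_idx w i" and i': "seq_idx w' i'"
    and same_block: "seq_block w i = seq_block w' i'"
  shows "stutter_equiv (seq_drop i w) (seq_drop i' w')"
proof -
  obtain v where "contracts_to w v" "contracts_to w' v"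
    using E unfolding stutter_equiv_def by blast
  then have "contracts_to (seq_drop i w) (seq_drop (seq_block w i) v)"
      "contracts_to (seq_drop i' w') (seq_drop (seq_block w i) v)"
    using contracts_to_drop i i' same_block by metis+
  then show ?thesis
    using E i i' unfolding stutter_equiv_def by auto
qed

lemma stutter_equiv_until:
  assumes E: "stutter_equiv w w'"
    and until: "seq_idx w i" "\<psi> (seq_drop i w)" "\<forall>j<i. \<phi> (seq_drop j w)"
    and \<phi>: "\<And>u u'. stutter_equiv u u' \<Longrightarrow> \<phi> u = \<phi> u'"
    and \<psi>: "\<And>u u'. stutter_equiv u u' \<Longrightarrow> \<psi> u = \<psi> u'"
  shows "\<exists>i. seq_idx w' i \<and> \<psi> (seq_drop i w') \<and> (\<forall>j<i. \<phi> (seq_drop j w'))"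
proof -
  define P where "P i' \<longleftrightarrow> seq_idx w' i' \<and> seq_block w' i' = seq_block w i" for i'
  obtain i' where "P i'"
    using stutter_equiv_same_block[OF E until(1)] P_def by blast
  \<comment> \<open>the first position of \<open>w'\<close> in the block of \<open>i\<close>; earlier positions of \<open>w'\<close> lie in earlier
      blocks, which occur in \<open>w\<close> before \<open>i\<close>\<close>
  define i0 where "i0 = (LEAST i'. P i')"
  have i0: "seq_idx w' i0" "seq_block w' i0 = seq_block w i"
    using LeastI[of P, OF \<open>P i'\<close>] unfolding i0_def P_def by auto
  have "\<psi> (seq_drop i0 w')"
    using \<psi>[OF stutter_equiv_drop[OF E until(1) i0(1) i0(2)[symmetric]]] until(2) by simp
  moreover have "\<phi> (seq_drop j' w')" if j': "j' < i0" for j'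
  proof -
    have idx_j': "seq_idx w' j'"
      using i0(1) j' seq_idx_le by (metis less_imp_le)
    have "\<not> P j'"
      using not_less_Least[of j' P] j' unfolding i0_def by blast
    then have "seq_block w' j' < seq_block w i"
      using seq_block_mono[of j' i0 w'] j' i0 idx_j' unfolding P_def by (simp add: order_less_le)
    moreover obtain j where j: "seq_idx w j" "seq_block w j = seq_block w' j'"
      using stutter_equiv_same_block[OF stutter_equiv_sym[OF E] idx_j'] by blast
    ultimately have "j < i"
      using block_index_less_imp_less unfolding seq_block_def by metis
    then have "\<phi> (seq_drop j w)"
      using until(3) by simp
    then show ?thesis
      using \<phi>[OF stutter_equiv_drop[OF E j(1) idx_j' j(2)]] by simp
  qed
  ultimately show ?thesis
    using i0 by blast
qed

lemma ltl_inf_stutter_invariant: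
  assumes "\<phi> \<in> ltl_inf" "stutter_equiv w w'"
  shows "\<phi> w = \<phi> w'"
  using assms
proof (induct arbitrary: w w' rule: ltl_inf.induct)
  case atom
  then show ?case by (simp add: stutter_equiv_hd)
next
  case (conj \<Phi>)
  have "\<phi> w = \<phi> w'" if "\<phi> \<in> \<Phi>" for \<phi>
    using bspec[OF conj.hyps that] conj.prems by blast
  then show ?case by blast
next
  case (until \<phi> \<psi>)
  have \<phi>: "\<phi> u = \<phi> u'" and \<psi>: "\<psi> u = \<psi> u'" if "stutter_equiv u u'" for u u'
    using until.hyps(2,4) that by blast+
  show ?case
  proof (intro iffI; elim exE conjE)
    fix i
    assume "seq_idx w i" "\<psi> (seq_drop i w)" "\<forall>j<i. \<phi> (seq_drop j w)"
    then show "\<exists>i. seq_idx w' i \<and> \<psi> (seq_drop i w') \<and> (\<forall>j<i. \<phi> (seq_drop j w'))"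
      by (rule stutter_equiv_until[OF until.prems]) (fact \<phi> \<psi>)+
  next
    fix i
    assume "seq_idx w' i" "\<psi> (seq_drop i w')" "\<forall>j<i. \<phi> (seq_drop j w')"
    then show "\<exists>i. seq_idx w i \<and> \<psi> (seq_drop i w) \<and> (\<forall>j<i. \<phi> (seq_drop j w))"
      by (rule stutter_equiv_until[OF stutter_equiv_sym[OF until.prems]]) (fact \<phi> \<psi>)+
  qed
next
  case infty
  then show ?case by (simp add: stutter_equiv_def)
qed simp

section \<open>Characteristic formulas\<close>

lemma ltl_inf_Ball: "(\<And>x. x \<in> S \<Longrightarrow> F x \<in> ltl_inf) \<Longrightarrow> (\<lambda>w. \<forall>x\<in>S. F x w) \<in> ltl_inf"
  using ltl_inf.conj[of "F ` S"] by simp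

lemma ltl_inf_conj2: "\<phi> \<in> ltl_inf \<Longrightarrow> \<psi> \<in> ltl_inf \<Longrightarrow> (\<lambda>w. \<phi> w \<and> \<psi> w) \<in> ltl_inf"
  using ltl_inf.conj[of "{\<phi>, \<psi>}"] by simp

lemma ltl_inf_True: "(\<lambda>w. True) \<in> ltl_inf"
  using ltl_inf.conj[of "{}"] by simp

lemma ltl_inf_hd_eq: "(\<lambda>w. seq_hd w = A) \<in> ltl_inf"
proof -
  have "(\<lambda>w. (\<forall>p\<in>A. p \<in> seq_hd w) \<and> (\<forall>p\<in>- A. \<not> p \<in> seq_hd w)) \<in> ltl_inf"
    by (intro ltl_inf_conj2 ltl_inf_Ball ltl_inf.neg ltl_inf.atom)
  moreover have "(\<lambda>w. (\<forall>p\<in>A. p \<in> seq_hd w) \<and> (\<forall>p\<in>- A. \<not> p \<in> seq_hd w)) = (\<lambda>w. seq_hd w = A)"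
    by auto
  ultimately show ?thesis by simp
qed

lemma ltl_inf_infinite_eq: "(\<lambda>w. seq_infinite w = b) \<in> ltl_inf"
  by (cases b) (simp_all add: ltl_inf.infty ltl_inf.neg)

fun prefix_formula :: "'a list \<Rightarrow> 'a seq \<Rightarrow> bool" where
  "prefix_formula [] = (\<lambda>w. True)"
| "prefix_formula [A] = (\<lambda>w. seq_hd w = A)"
| "prefix_formula (A # B # xs) = (\<lambda>w. seq_hd w = A \<and>
     (\<exists>i. seq_idx w i \<and> prefix_formula (B # xs) (seq_drop i w) \<and> (\<forall>j<i. seq_hd (seq_drop j w) = A)))"

lemma prefix_formula_ltl_inf: "prefix_formula xs \<in> ltl_inf"
proof (induct xs rule: prefix_formula.induct)
  case (3 A B xs)
  then show ?case
    using ltl_inf_conj2[OF ltl_inf_hd_eq ltl_inf.until[OF ltl_inf_hd_eq[of A] 3]] by simp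
qed (simp_all add: ltl_inf_True ltl_inf_hd_eq)

text \<open>\<open>spells w xs i\<close>: the entries of \<open>w\<close> up to position \<open>i\<close> run through the blocks
  \<open>xs ! 0, xs ! 1, \<dots>\<close> and end in the last one.\<close>

definition spells :: "'a seq \<Rightarrow> 'a list \<Rightarrow> nat \<Rightarrow> bool" where
  "spells w xs i \<longleftrightarrow>
     seq_idx w i \<and> seq_block w i = length xs - 1 \<and> (\<forall>k\<le>i. seq_nth w k = xs ! seq_block w k)"

lemma spells_Cons_ConsI:
  assumes i: "seq_idx w i" and A: "\<forall>j<i. seq_nth w j = A" "seq_nth w 0 = A"
    and spells: "spells (seq_drop i w) (B # xs) i'" and "A \<noteq> B"
  shows "spells w (A # B # xs) (i + i')"
proof -
  have "seq_nth w i = B"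
    using spells seq_nth_drop[OF i, of 0] by (auto simp: spells_def)
  then obtain p where p: "i = Suc p"
    using A \<open>A \<noteq> B\<close> by (cases i) auto
  have block_A: "seq_block w j = 0" if "j < i" for j
    unfolding seq_block_def by (rule block_index_eq_0) (use A that in simp)
  have "seq_block w i = 1"
    using block_A[of p] p \<open>seq_nth w i = B\<close> A \<open>A \<noteq> B\<close> by (simp add: seq_block_def)
  then have block_B: "seq_block w (i + k) = Suc (seq_block (seq_drop i w) k)" for k
    using seq_block_drop[OF i] by simp
  show ?thesis
    unfolding spells_def
  proof (intro conjI allI impI)
    show "seq_idx w (i + i')" "seq_block w (i + i') = length (A # B # xs) - 1"
      using spells block_B by (simp_all add: spells_def)
  next
    fix k
    assume k: "k \<le> i + i'"
    show "seq_nth w k = (A # B # xs) ! seq_block w k"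
    proof (cases "k < i")
      case True
      then show ?thesis using A block_A by simp
    next
      case False
      then obtain k' where k': "k = i + k'" "k' \<le> i'"
        using k by (metis add_le_cancel_left le_add_diff_inverse not_less)
      then show ?thesis
        using spells block_B seq_nth_drop[OF i] by (simp add: spells_def)
    qed
  qed
qed

lemma spells_Cons_ConsD:
  assumes spells: "spells w (A # B # xs) I"
  obtains i where "seq_idx w i" "\<forall>j<i. seq_nth w j = A" "spells (seq_drop i w) (B # xs) (I - i)"
proof -
  have block_I: "seq_block w I = Suc (length xs)"
    using spells by (simp add: spells_def)
  define i where "i = (LEAST i. seq_block w i \<noteq> 0)"
  have "seq_block w i \<noteq> 0"
    unfolding i_def by (rule LeastI[of _ I]) (simp add: block_I)
  have "i \<le> I"
    unfolding i_def by (rule Least_le) (simp add: block_I)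
  have block_A: "seq_block w j = 0" if "j < i" for j
    using not_less_Least that i_def by blast
  obtain p where p: "i = Suc p"
    using \<open>seq_block w i \<noteq> 0\<close> by (cases i) auto
  have "seq_block w i = 1"
    using block_A[of p] p \<open>seq_block w i \<noteq> 0\<close> by (simp add: seq_block_def split: if_splits)
  have i: "seq_idx w i"
    using spells \<open>i \<le> I\<close> seq_idx_le by (auto simp: spells_def)
  have "seq_nth w j = A" if "j < i" for j
    using spells block_A[OF that] that \<open>i \<le> I\<close> by (simp add: spells_def)
  moreover have "spells (seq_drop i w) (B # xs) (I - i)"
    unfolding spells_def
  proof (intro conjI allI impI)
    have block_B: "seq_block w (i + k) = Suc (seq_block (seq_drop i w) k)" for k
      using seq_block_drop[OF i] \<open>seq_block w i = 1\<close> by simp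
    have I: "I = i + (I - i)"
      using \<open>i \<le> I\<close> by simp
    show "seq_idx (seq_drop i w) (I - i)"
      using spells I by (simp add: spells_def)
    show "seq_block (seq_drop i w) (I - i) = length (B # xs) - 1"
      using block_B[of "I - i"] I block_I by simp
    fix k
    assume "k \<le> I - i"
    then have "seq_nth w (i + k) = (A # B # xs) ! seq_block w (i + k)"
      using spells \<open>i \<le> I\<close> by (simp add: spells_def)
    then show "seq_nth (seq_drop i w) k = (B # xs) ! seq_block (seq_drop i w) k"
      using block_B seq_nth_drop[OF i] by simp
  qed
  ultimately show ?thesis
    using that i by blast
qed

lemma prefix_formula_iff_spells:
  "seq_idx w 0 \<Longrightarrow> xs \<noteq> [] \<Longrightarrow> distinct_adj xs \<Longrightarrow> prefix_formula xs w \<longleftrightarrow> (\<exists>i. spells w xs i)"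
proof (induct xs arbitrary: w rule: prefix_formula.induct)
  case (2 A)
  have "spells w [A] 0 \<longleftrightarrow> seq_nth w 0 = A"
    using 2 by (simp add: spells_def)
  moreover have "spells w [A] i \<Longrightarrow> seq_nth w 0 = A" for i
    by (simp add: spells_def)
  ultimately show ?case
    using 2 by (auto simp: seq_hd_conv_nth)
next
  case (3 A B xs)
  have "A \<noteq> B" "distinct_adj (B # xs)"
    using 3(4) by (simp_all add: distinct_adj_def)
  show ?case
  proof
    assume "prefix_formula (A # B # xs) w"
    then obtain i where i: "seq_idx w i" "prefix_formula (B # xs) (seq_drop i w)"
      "\<forall>j<i. seq_hd (seq_drop j w) = A" and "seq_hd w = A"
      by auto
    obtain i' where "spells (seq_drop i w) (B # xs) i'"
      using 3(1)[of "seq_drop i w"] i \<open>distinct_adj (B # xs)\<close> by auto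
    moreover have "\<forall>j<i. seq_nth w j = A"
      using i seq_hd_drop seq_idx_le by (metis less_imp_le)
    ultimately have "spells w (A # B # xs) (i + i')"
      using spells_Cons_ConsI i(1) \<open>seq_hd w = A\<close> \<open>A \<noteq> B\<close> 3(2) by (metis seq_hd_conv_nth)
    then show "\<exists>i. spells w (A # B # xs) i" ..
  next
    assume "\<exists>I. spells w (A # B # xs) I"
    then obtain I where I: "spells w (A # B # xs) I" ..
    then obtain i where i: "seq_idx w i" "\<forall>j<i. seq_nth w j = A" "spells (seq_drop i w) (B # xs) (I - i)"
      by (rule spells_Cons_ConsD)
    have "prefix_formula (B # xs) (seq_drop i w)"
      using 3(1)[of "seq_drop i w"] i \<open>distinct_adj (B # xs)\<close> by auto
    moreover have "\<forall>j<i. seq_hd (seq_drop j w) = A"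
      using i seq_hd_drop seq_idx_le by (metis less_imp_le)
    moreover have "seq_hd w = A"
      using I 3(2) by (simp add: spells_def seq_hd_conv_nth)
    ultimately show "prefix_formula (A # B # xs) w"
      using i(1) by auto
  qed
qed simp

definition has_prefix :: "'a seq \<Rightarrow> 'a list \<Rightarrow> bool" where
  "has_prefix v xs \<longleftrightarrow> (\<forall>k<length xs. seq_idx v k \<and> seq_nth v k = xs ! k)"

lemma spells_iff_has_prefix:
  assumes v: "contracts_to w v" and "xs \<noteq> []"
  shows "(\<exists>i. spells w xs i) \<longleftrightarrow> has_prefix v xs"
proof
  assume "\<exists>i. spells w xs i"
  then obtain i where i: "spells w xs i" ..
  show "has_prefix v xs"
    unfolding has_prefix_def
  proof (intro allI impI)
    fix k
    assume "k < length xs"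
    then have "k \<le> seq_block w i"
      using i by (simp add: spells_def)
    then obtain i' where i': "i' \<le> i" "seq_block w i' = k"
      using block_index_attains unfolding seq_block_def by blast
    have "seq_idx w i'"
      using i i' seq_idx_le unfolding spells_def by blast
    then have "seq_idx v k" "seq_nth v k = seq_nth w i'"
      using v i' unfolding contracts_to_def by auto
    moreover have "seq_nth w i' = xs ! k"
      using i i' unfolding spells_def by blast
    ultimately show "seq_idx v k \<and> seq_nth v k = xs ! k"
      by simp
  qed
next
  assume prefix: "has_prefix v xs"
  have "seq_idx v (length xs - 1)"
    using prefix \<open>xs \<noteq> []\<close> unfolding has_prefix_def by simp
  then obtain i where i: "seq_idx w i" "seq_block w i = length xs - 1"
    using v unfolding contracts_to_def by blast
  have "seq_nth w k = xs ! seq_block w k" if "k \<le> i" for k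
  proof -
    have "seq_idx w k"
      using i that seq_idx_le by blast
    moreover have "seq_block w k < length xs"
      using seq_block_mono[OF that, of w] i \<open>xs \<noteq> []\<close> by (cases xs) auto
    ultimately show ?thesis
      using v prefix unfolding contracts_to_def has_prefix_def by auto
  qed
  then show "\<exists>i. spells w xs i"
    using i unfolding spells_def by blast
qed

lemma prefix_formula_iff_has_prefix:
  "seq_idx w 0 \<Longrightarrow> xs \<noteq> [] \<Longrightarrow> distinct_adj xs \<Longrightarrow> prefix_formula xs w \<longleftrightarrow> has_prefix (destutter w) xs"
  by (simp add: prefix_formula_iff_spells spells_iff_has_prefix contracts_to_destutter)

definition stutter_free :: "'a seq \<Rightarrow> bool" where
  "stutter_free v \<longleftrightarrow> seq_idx v 0 \<and> (\<forall>k. seq_idx v (Suc k) \<longrightarrow> seq_nth v (Suc k) \<noteq> seq_nth v k)"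

lemma stutter_free_destutter:
  assumes "seq_idx w 0"
  shows "stutter_free (destutter w)"
proof -
  have contracts: "contracts_to w (destutter w)"
    using contracts_to_destutter[OF assms] .
  then have "seq_idx (destutter w) 0"
    using assms seq_block_0 unfolding contracts_to_def by blast
  then show ?thesis
    using contracts_to_adjacent_distinct[OF contracts] unfolding stutter_free_def by blast
qed

lemma stutter_free_FinS: "stutter_free (FinS xs) \<longleftrightarrow> xs \<noteq> [] \<and> distinct_adj xs"
  by (auto simp: stutter_free_def distinct_adj_conv_nth)

lemma stutter_free_InfS: "stutter_free (InfS f) \<Longrightarrow> distinct_adj (map f [0..<n])"
  by (simp add: stutter_free_def distinct_adj_conv_nth del: upt_Suc) metis

lemma has_prefix_maximal_iff:
  assumes v: "stutter_free v" and "xs \<noteq> []"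
  shows "has_prefix v xs \<and> (\<forall>B\<in>- {last xs}. \<not> has_prefix v (xs @ [B])) \<longleftrightarrow> v = FinS xs"
proof
  assume "has_prefix v xs \<and> (\<forall>B\<in>- {last xs}. \<not> has_prefix v (xs @ [B]))"
  then have prefix: "has_prefix v xs" and maximal: "\<forall>B\<in>- {last xs}. \<not> has_prefix v (xs @ [B])"
    by simp_all
  have "\<not> seq_idx v (length xs)"
  proof
    assume idx: "seq_idx v (length xs)"
    have "seq_nth v (length xs) \<noteq> seq_nth v (length xs - 1)"
      using v idx \<open>xs \<noteq> []\<close> unfolding stutter_free_def by (metis Suc_pred' length_greater_0_conv)
    moreover have "seq_nth v (length xs - 1) = last xs"
      using prefix \<open>xs \<noteq> []\<close> unfolding has_prefix_def by (simp add: last_conv_nth)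
    moreover have "has_prefix v (xs @ [seq_nth v (length xs)])"
      using prefix idx unfolding has_prefix_def by (auto simp: nth_append less_Suc_eq)
    ultimately show False
      using maximal by simp
  qed
  then have "seq_idx v i \<longleftrightarrow> i < length xs" for i
    using prefix seq_idx_le[of v i "length xs"] unfolding has_prefix_def by (meson not_less)
  then show "v = FinS xs"
    using prefix unfolding has_prefix_def by (intro seq_eqI) simp_all
next
  assume "v = FinS xs"
  then show "has_prefix v xs \<and> (\<forall>B\<in>- {last xs}. \<not> has_prefix v (xs @ [B]))"
    unfolding has_prefix_def by auto
qed

lemma has_prefix_all_iff: "(\<forall>n. has_prefix v (map f [0..<Suc n])) \<longleftrightarrow> v = InfS f"
proof
  assume prefixes: "\<forall>n. has_prefix v (map f [0..<Suc n])"
  have "seq_idx v k \<and> seq_nth v k = f k" for k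
    using prefixes[rule_format, of k] unfolding has_prefix_def by (simp del: upt_Suc)
  then show "v = InfS f"
    by (intro seq_eqI) simp_all
next
  assume "v = InfS f"
  then show "\<forall>n. has_prefix v (map f [0..<Suc n])"
    unfolding has_prefix_def by (simp del: upt_Suc)
qed

text \<open>Both clauses are infinite conjunctions in general: over all labels \<open>B\<close>, and over all
  finite prefixes.\<close>

fun char_formula :: "'a seq \<Rightarrow> 'a seq \<Rightarrow> bool" where
  "char_formula (FinS xs) =
     (\<lambda>w. prefix_formula xs w \<and> (\<forall>B\<in>- {last xs}. \<not> prefix_formula (xs @ [B]) w))"
| "char_formula (InfS f) = (\<lambda>w. \<forall>n. prefix_formula (map f [0..<Suc n]) w)"

lemma char_formula_ltl_inf: "char_formula v \<in> ltl_inf"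
proof (cases v)
  case (FinS xs)
  then show ?thesis
    by (simp add: ltl_inf_conj2 ltl_inf_Ball ltl_inf.neg prefix_formula_ltl_inf)
next
  case (InfS f)
  then show ?thesis
    using ltl_inf_Ball[of UNIV "\<lambda>n. prefix_formula (map f [0..<Suc n])", OF prefix_formula_ltl_inf]
    by simp
qed

lemma char_formula_iff:
  assumes v: "stutter_free v" and w: "seq_idx w 0"
  shows "char_formula v w \<longleftrightarrow> destutter w = v"
proof (cases v)
  case (FinS xs)
  then have "xs \<noteq> []" "distinct_adj xs"
    using v by (simp_all add: stutter_free_FinS)
  moreover have "distinct_adj (xs @ [B])" if "B \<noteq> last xs" for B
    using that \<open>distinct_adj xs\<close> by (simp add: distinct_adj_append_iff)
  ultimately show ?thesis
    using FinS has_prefix_maximal_iff[OF stutter_free_destutter[OF w]]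
    by (simp add: prefix_formula_iff_has_prefix[OF w])
next
  case (InfS f)
  then show ?thesis
    using v has_prefix_all_iff
    by (simp add: prefix_formula_iff_has_prefix[OF w] stutter_free_InfS del: upt_Suc)
qed

section \<open>Traces of maximal paths\<close>

lemma is_path_from_idx_0: "is_path_from R s \<pi> \<Longrightarrow> seq_idx \<pi> 0"
  by (cases \<pi>) auto

lemma seq_infinite_is_maximal: "seq_infinite \<pi> \<Longrightarrow> is_maximal R \<pi>"
  by (cases \<pi>) auto

lemma seq_infinite_coloured: "seq_infinite (coloured L \<pi>) \<Longrightarrow> seq_infinite \<pi>"
  by (cases \<pi>) (auto simp: coloured_def)

definition maximal_traces :: "('s \<Rightarrow> 's \<Rightarrow> bool) \<Rightarrow> ('s \<Rightarrow> 'p set) \<Rightarrow> 's \<Rightarrow> bool \<Rightarrow> 'p set seq set" where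
  "maximal_traces R L s b =
     {coloured L \<pi> | \<pi>. is_path_from R s \<pi> \<and> is_maximal R \<pi> \<and> seq_infinite \<pi> = b}"

lemma complete_traces_eq: "complete_traces R L s = maximal_traces R L s True \<union> maximal_traces R L s False"
  unfolding complete_traces_def maximal_traces_def by blast

lemma deadlock_traces_eq: "deadlock_traces R L s = maximal_traces R L s False"
  unfolding deadlock_traces_def maximal_traces_def by blast

lemma divergent_traces_eq:
  "divergent_traces R L s = maximal_traces R L s True \<inter> {\<sigma>. \<not> seq_infinite \<sigma>}"
  unfolding divergent_traces_def maximal_traces_def using seq_infinite_is_maximal by fastforce

lemma maximal_traces_True_eq:
  "maximal_traces R L s True = divergent_traces R L s \<union> (complete_traces R L s \<inter> {\<sigma>. seq_infinite \<sigma>})"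
  unfolding divergent_traces_def complete_traces_def maximal_traces_def
  using seq_infinite_is_maximal seq_infinite_coloured by fastforce

lemma div_dead_equiv_iff_maximal_traces:
  "div_dead_equiv R L s t \<longleftrightarrow> (\<forall>b. maximal_traces R L s b = maximal_traces R L t b)"
proof
  assume "div_dead_equiv R L s t"
  then have "maximal_traces R L s b = maximal_traces R L t b" for b
    unfolding div_dead_equiv_def by (cases b) (simp_all only: maximal_traces_True_eq deadlock_traces_eq)
  then show "\<forall>b. maximal_traces R L s b = maximal_traces R L t b" ..
next
  assume "\<forall>b. maximal_traces R L s b = maximal_traces R L t b"
  then show "div_dead_equiv R L s t"
    unfolding div_dead_equiv_def complete_traces_eq divergent_traces_eq deadlock_traces_eq by simp
qed

lemma state_sat_transfer:
  assumes traces: "\<And>b. maximal_traces R L t b \<subseteq> maximal_traces R L s b"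
    and "\<psi> \<in> ltl_inf" and "state_sat R L s \<psi>"
  shows "state_sat R L t \<psi>"
  unfolding state_sat_def
proof (intro allI impI)
  fix \<pi>
  assume \<pi>: "is_path_from R t \<pi> \<and> is_maximal R \<pi>"
  then have "coloured L \<pi> \<in> maximal_traces R L s (seq_infinite \<pi>)"
    using traces unfolding maximal_traces_def by blast
  then obtain \<pi>' where \<pi>': "is_path_from R s \<pi>'" "is_maximal R \<pi>'"
      "seq_infinite \<pi>' = seq_infinite \<pi>" "coloured L \<pi>' = coloured L \<pi>"
    unfolding maximal_traces_def by force
  have "\<psi> (seq_map L \<pi>')"
    using \<open>state_sat R L s \<psi>\<close> \<pi>' unfolding state_sat_def by blast
  moreover have "stutter_equiv (seq_map L \<pi>') (seq_map L \<pi>)"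
    using \<pi>' \<pi> is_path_from_idx_0[of R s \<pi>'] is_path_from_idx_0[of R t \<pi>]
    by (intro stutter_equivI) (simp_all add: coloured_def)
  ultimately show "\<psi> (seq_map L \<pi>)"
    using ltl_inf_stutter_invariant[OF \<open>\<psi> \<in> ltl_inf\<close>] by blast
qed

lemma maximal_traces_mono:
  assumes sat: "\<forall>\<psi>\<in>ltl_inf. state_sat R L t \<psi> \<longrightarrow> state_sat R L s \<psi>"
  shows "maximal_traces R L s b \<subseteq> maximal_traces R L t b"
proof
  fix \<sigma>
  assume "\<sigma> \<in> maximal_traces R L s b"
  then obtain \<pi> where \<pi>: "\<sigma> = coloured L \<pi>" "is_path_from R s \<pi>" "is_maximal R \<pi>" "seq_infinite \<pi> = b"
    unfolding maximal_traces_def by blast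
  have idx: "seq_idx (seq_map L \<pi>) 0"
    using is_path_from_idx_0[OF \<pi>(2)] by simp
  have \<sigma>: "stutter_free \<sigma>"
    using stutter_free_destutter[OF idx] \<pi>(1) by (simp add: coloured_def)
  define \<psi> where "\<psi> w \<longleftrightarrow> \<not> (char_formula \<sigma> w \<and> seq_infinite w = b)" for w
  have "\<psi> \<in> ltl_inf"
    unfolding \<psi>_def by (intro ltl_inf.neg ltl_inf_conj2 char_formula_ltl_inf ltl_inf_infinite_eq)
  moreover have "\<not> state_sat R L s \<psi>"
    using \<pi> char_formula_iff[OF \<sigma> idx] unfolding state_sat_def \<psi>_def by (auto simp: coloured_def)
  ultimately have "\<not> state_sat R L t \<psi>"
    using sat by blast
  then obtain \<pi>' where \<pi>': "is_path_from R t \<pi>'" "is_maximal R \<pi>'"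
      "char_formula \<sigma> (seq_map L \<pi>')" "seq_infinite \<pi>' = b"
    unfolding state_sat_def \<psi>_def by auto
  moreover have "coloured L \<pi>' = \<sigma>"
    using \<pi>'(3) char_formula_iff[OF \<sigma>] is_path_from_idx_0[OF \<pi>'(1)] by (simp add: coloured_def)
  ultimately show "\<sigma> \<in> maximal_traces R L t b"
    unfolding maximal_traces_def by blast
qed

theorem theorem9p5:
  fixes R :: "'s \<Rightarrow> 's \<Rightarrow> bool" and L :: "'s \<Rightarrow> 'p set" and s t :: 's
  shows "div_dead_equiv R L s t \<longleftrightarrow>
         (\<forall>\<psi>\<in>ltl_inf. state_sat R L s \<psi> \<longleftrightarrow> state_sat R L t \<psi>)"
proof
  assume "div_dead_equiv R L s t"
  then have "maximal_traces R L s b = maximal_traces R L t b" for b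
    by (simp add: div_dead_equiv_iff_maximal_traces)
  then show "\<forall>\<psi>\<in>ltl_inf. state_sat R L s \<psi> \<longleftrightarrow> state_sat R L t \<psi>"
    using state_sat_transfer[of R L t s] state_sat_transfer[of R L s t] by (metis order_refl)
next
  assume "\<forall>\<psi>\<in>ltl_inf. state_sat R L s \<psi> \<longleftrightarrow> state_sat R L t \<psi>"
  then have "maximal_traces R L s b \<subseteq> maximal_traces R L t b"
      "maximal_traces R L t b \<subseteq> maximal_traces R L s b" for b
    by (simp_all add: maximal_traces_mono)
  then show "div_dead_equiv R L s t"
    by (simp add: div_dead_equiv_iff_maximal_traces subset_antisym)
qed

end
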